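(* Let $d=2^N$ and let $\boldsymbol\theta\mapsto U(\boldsymbol\theta)$ be a smooth map from $\mathbb{R}^{N_p}$ to the $d\times d$ unitaries such that $\partial U/\partial\theta_a=-iU(\boldsymbol\theta)\mu_a(\boldsymbol\theta)$ with each $\mu_a(\boldsymbol\theta)$ Hermitian and smooth in $\boldsymbol\theta$. Let $W$ be a fixed unitary and $\mathcal{L}_E(\boldsymbol\theta)=\|U(\boldsymbol\theta)-W\|_F^2$. Assume local surjectivity holds at every point (so in particular $N_p\ge d^2$), i.e. for every $\boldsymbol\theta$ the set $\{\mu_a(\boldsymbol\theta)\}_a$ spans the real space of $d\times d$ Hermitian matrices. Let $\boldsymbol\theta^*$ be a critical point of $\mathcal{L}_E$ and $\chi=U(\boldsymbol\theta^* )^\dagger W$ (which is then a Hermitian unitary). Then: if $U(\boldsymbol\theta^* )=W$ (i.e. $\chi=\mathbb{1}$), the Hessian at $\boldsymbol\theta^*$ is positive semidefinite and $\boldsymbol\theta^*$ is a global minimum ($\mathcal{L}_E=0$); if $U(\boldsymbol\theta^* )=-W$ (i.e. $\chi=-\mathbb{1}$), the Hessian is negative semidefinite and $\boldsymbol\theta^*$ is a global maximum; and in every other case ($\chi$ has both eigenvalues $+1$ and $-1$) the Hessian has at least one strictly positive and one strictly negative eigenvalue, so $\boldsymbol\theta^*$ is a saddle point. Consequently, $\mathcal{L}_E$ has no local minima other than global minima (its landscape is trap-free).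
   Context: $\|A\|_F^2=\mathrm{Tr}(A^\dagger A)$ is the Frobenius norm. The $\mu_a$ are the dynamical-derivative generators of an analog ansatz, $\mu_a=\int_0^T g_a(t)U(t,0)^\dagger h_aU(t,0)\,dt$; local surjectivity is the condition that these generators span all Hermitian matrices. *)

theory Defs
  imports "HOL-Analysis.Analysis"
begin

definition adj :: "complex^'n^'m \<Rightarrow> complex^'m^'n" where
  "adj A = (\<chi> i j. cnj (A $ j $ i))"

definition hermitian :: "complex^'n^'n \<Rightarrow> bool" where
  "hermitian A \<longleftrightarrow> adj A = A"

definition unitary :: "complex^'n^'n \<Rightarrow> bool" where
  "unitary A \<longleftrightarrow> adj A ** A = mat 1 \<and> A ** adj A = mat 1"

definition cscale :: "complex \<Rightarrow> complex^'n^'m \<Rightarrow> complex^'n^'m" where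
  "cscale c A = (\<chi> i j. c * A $ i $ j)"

definition frob_sq :: "complex^'n^'n \<Rightarrow> real" where
  "frob_sq A = Re (trace (adj A ** A))"

definition is_eigenvalue :: "'a::field^'n^'n \<Rightarrow> 'a \<Rightarrow> bool" where
  "is_eigenvalue M l \<longleftrightarrow> (\<exists>v. v \<noteq> 0 \<and> M *v v = l *s v)"

definition has_partial ::
  "(real^'p \<Rightarrow> 'b::real_normed_vector) \<Rightarrow> 'p \<Rightarrow> real^'p \<Rightarrow> 'b \<Rightarrow> bool" where
  "has_partial f a x D \<longleftrightarrow> ((\<lambda>t. f (x + t *\<^sub>R axis a 1)) has_vector_derivative D) (at 0)"

definition pderiv ::
  "(real^'p \<Rightarrow> 'b::real_normed_vector) \<Rightarrow> 'p \<Rightarrow> real^'p \<Rightarrow> 'b" where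
  "pderiv f a x = vector_derivative (\<lambda>t. f (x + t *\<^sub>R axis a 1)) (at 0)"

fun Ck :: "nat \<Rightarrow> (real^'p \<Rightarrow> 'b::real_normed_vector) \<Rightarrow> bool" where
  "Ck 0 f = continuous_on UNIV f"
| "Ck (Suc k) f = (continuous_on UNIV f \<and>
      (\<forall>a. \<exists>g. (\<forall>x. has_partial f a x (g x)) \<and> Ck k g))"

definition smooth :: "(real^'p \<Rightarrow> 'b::real_normed_vector) \<Rightarrow> bool" where
  "smooth f \<longleftrightarrow> (\<forall>k. Ck k f)"

definition critical_point :: "(real^'p \<Rightarrow> real) \<Rightarrow> real^'p \<Rightarrow> bool" where
  "critical_point f x \<longleftrightarrow> (\<forall>a. has_partial f a x 0)"

definition hessian :: "(real^'p \<Rightarrow> real) \<Rightarrow> real^'p \<Rightarrow> real^'p^'p" where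
  "hessian f x = (\<chi> a b. pderiv (\<lambda>y. pderiv f b y) a x)"

definition pos_semidef :: "real^'p^'p \<Rightarrow> bool" where
  "pos_semidef H \<longleftrightarrow> (\<forall>v. v \<bullet> (H *v v) \<ge> 0)"

definition neg_semidef :: "real^'p^'p \<Rightarrow> bool" where
  "neg_semidef H \<longleftrightarrow> (\<forall>v. v \<bullet> (H *v v) \<le> 0)"

definition local_min :: "(real^'p \<Rightarrow> real) \<Rightarrow> real^'p \<Rightarrow> bool" where
  "local_min f x \<longleftrightarrow> (\<exists>e>0. \<forall>y. dist y x < e \<longrightarrow> f x \<le> f y)"

definition local_max :: "(real^'p \<Rightarrow> real) \<Rightarrow> real^'p \<Rightarrow> bool" where
  "local_max f x \<longleftrightarrow> (\<exists>e>0. \<forall>y. dist y x < e \<longrightarrow> f y \<le> f x)"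

definition saddle_point :: "(real^'p \<Rightarrow> real) \<Rightarrow> real^'p \<Rightarrow> bool" where
  "saddle_point f x \<longleftrightarrow> critical_point f x \<and> \<not> local_min f x \<and> \<not> local_max f x"

end

theory Submission
  imports Defs
begin

text \<open>With \<chi> = adj U W we have L = 2d - 2 Re Tr \<chi>, and the derivative of U along a
  direction v is -iU\<mu>_v. Hence L has slope 2 Im Tr(\<mu>_v \<chi>) along v; by local surjectivity
  all slopes vanish exactly when \<chi> is Hermitian, i.e. a Hermitian unitary involution.
  At such a point the second derivative along v is 2 Re Tr(\<mu>_v \<mu>_v \<chi>), and choosing
  \<mu>_v = w adj w for an eigenvector w of \<chi> with eigenvalue \<lambda> = \<plusminus>1 makes it 2\<lambda>|w|^4. So \<chi> = 1
  is the global minimum, \<chi> = -1 the global maximum, and every other critical point has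
  directions of curvature of both signs.\<close>

section \<open>Complex matrices\<close>

lemma adj_adj [simp]: "adj (adj A) = A"
  by (simp add: adj_def vec_eq_iff)

lemma adj_mult: "adj (A ** B) = adj B ** adj A"
  by (simp add: adj_def vec_eq_iff matrix_matrix_mult_def cnj_sum mult.commute)

lemma adj_diff: "adj (A - B) = adj A - adj B"
  by (simp add: adj_def vec_eq_iff)

lemma adj_uminus: "adj (- A) = - adj A"
  by (simp add: adj_def vec_eq_iff)

lemma adj_cscale: "adj (cscale c A) = cscale (cnj c) (adj A)"
  by (simp add: adj_def cscale_def vec_eq_iff)

lemma trace_adj: "trace (adj A) = cnj (trace A)"
  by (simp add: trace_def adj_def cnj_sum)

lemma trace_cscale: "trace (cscale c A) = c * trace A"
  by (simp add: trace_def cscale_def sum_distrib_left)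

lemma trace_uminus: "trace (- (A::'a::comm_ring_1^'n^'n)) = - trace A"
  by (simp add: trace_def sum_negf)

lemma cscale_matrix_mul_left: "cscale c A ** B = cscale c (A ** B)"
  by (simp add: cscale_def vec_eq_iff matrix_matrix_mult_def sum_distrib_left mult.assoc)

lemma cscale_matrix_mul_right: "A ** cscale c B = cscale c (A ** B)"
  by (simp add: cscale_def vec_eq_iff matrix_matrix_mult_def sum_distrib_left mult.left_commute)

lemma matrix_mul_uminus_left: "(- A) ** (B::'a::comm_ring_1^'n^'m) = - (A ** B)"
  by (simp add: vec_eq_iff matrix_matrix_mult_def sum_negf)

lemma matrix_mul_uminus_right: "(A::'a::comm_ring_1^'n^'m) ** (- B) = - (A ** B)"
  by (simp add: vec_eq_iff matrix_matrix_mult_def sum_negf)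

lemma matrix_diff_ldistrib: "(A::'a::comm_ring_1^'n^'m) ** (B - C) = A ** B - A ** C"
  by (simp add: vec_eq_iff matrix_matrix_mult_def right_diff_distrib sum_subtractf)

lemma matrix_diff_rdistrib: "((A::'a::comm_ring_1^'n^'m) - B) ** C = A ** C - B ** C"
  by (simp add: vec_eq_iff matrix_matrix_mult_def left_diff_distrib sum_subtractf)

lemma mat_minus_one: "mat (- 1) = - (mat 1 :: 'a::comm_ring_1^'n^'n)"
  by (simp add: mat_def vec_eq_iff)

lemma bounded_linear_adj: "bounded_linear (adj :: complex^'n^'m \<Rightarrow> _)"
  by (simp add: linear_conv_bounded_linear[symmetric] linearI adj_def vec_eq_iff)

lemma bounded_linear_cscale: "bounded_linear (cscale c :: complex^'n^'m \<Rightarrow> _)"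
  by (simp add: linear_conv_bounded_linear[symmetric] linearI cscale_def vec_eq_iff algebra_simps)

lemma bounded_linear_trace: "bounded_linear (trace :: complex^'n^'n \<Rightarrow> complex)"
  by (simp add: linear_conv_bounded_linear[symmetric] linearI trace_def sum.distrib scaleR_sum_right)

lemma bounded_bilinear_matrix_mul:
  "bounded_bilinear ((**) :: complex^'n^'m \<Rightarrow> complex^'k^'n \<Rightarrow> _)"
  unfolding bilinear_conv_bounded_bilinear[symmetric] bilinear_def
  by (auto intro!: linearI simp: vec_eq_iff matrix_matrix_mult_def algebra_simps
      sum.distrib scaleR_sum_right)

lemma unitary_mult: "unitary A \<Longrightarrow> unitary B \<Longrightarrow> unitary (A ** B)"
  unfolding unitary_def adj_mult by (metis matrix_mul_assoc matrix_mul_lid)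

lemma unitary_adj: "unitary A \<Longrightarrow> unitary (adj A)"
  unfolding unitary_def by simp

lemma unitary_uminus: "unitary A \<Longrightarrow> unitary (- A)"
  unfolding unitary_def by (simp add: adj_uminus matrix_mul_uminus_left matrix_mul_uminus_right)

lemma Im_trace_hermitian_mult:
  assumes "hermitian A" "hermitian B"
  shows "Im (trace (A ** B)) = 0"
proof -
  have "cnj (trace (A ** B)) = trace (A ** B)"
    using assms by (simp add: trace_adj[symmetric] adj_mult hermitian_def trace_mul_sym[of B A])
  then show ?thesis by (metis cnj.sel(2) equation_minus_iff neg_equal_zero)
qed

lemma Re_trace_hermitian_swap:
  assumes "hermitian A" "hermitian B" "hermitian C"
  shows "Re (trace (A ** (B ** C))) = Re (trace (B ** (A ** C)))"
proof -
  have "cnj (trace (A ** (B ** C))) = trace ((C ** B) ** A)"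
    using assms by (simp add: trace_adj[symmetric] adj_mult hermitian_def)
  also have "\<dots> = trace (B ** (A ** C))"
    by (metis matrix_mul_assoc trace_mul_sym)
  finally show ?thesis by (metis complex_cnj_cnj complex.sel(1) cnj.sel(1))
qed

lemma frob_sq_eq_sum: "frob_sq A = (\<Sum>i\<in>UNIV. \<Sum>j\<in>UNIV. (cmod (A $ j $ i))\<^sup>2)"
  by (simp add: frob_sq_def trace_def adj_def matrix_matrix_mult_def Re_sum)
     (simp add: cmod_power2, simp add: power2_eq_square)

lemma frob_sq_nonneg: "frob_sq A \<ge> 0"
  unfolding frob_sq_eq_sum by (intro sum_nonneg) auto

lemma frob_sq_eq_0_iff: "frob_sq A = 0 \<longleftrightarrow> A = 0"
  unfolding frob_sq_eq_sum
  by (auto simp: sum_nonneg_eq_0_iff sum_nonneg vec_eq_iff)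

lemma frob_sq_diff_unitary:
  assumes "unitary A" "unitary B"
  shows "frob_sq (A - B) = 2 * CARD('n) - 2 * Re (trace (adj A ** B :: complex^'n^'n))"
proof -
  have "adj (A - B) ** (A - B) = mat 1 - adj A ** B - adj B ** A + mat 1"
    using assms by (simp add: adj_diff matrix_diff_ldistrib matrix_diff_rdistrib unitary_def)
  moreover have "trace (adj B ** A) = cnj (trace (adj A ** B))"
    by (metis adj_adj adj_mult trace_adj)
  ultimately have "trace (adj (A - B) ** (A - B))
      = 2 * of_nat CARD('n) - trace (adj A ** B) - cnj (trace (adj A ** B))"
    by (simp only: trace_add trace_sub trace_I) simp
  then show ?thesis by (simp add: frob_sq_def)
qed

text \<open>Write A = P + iR with P, R Hermitian; testing with H = R gives Tr(R R) = 0.\<close>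
lemma hermitian_if_Im_trace_vanishes:
  assumes "\<And>H. hermitian H \<Longrightarrow> Im (trace (H ** A)) = 0"
  shows "hermitian A"
proof -
  define P where "P = cscale (1/2) (A + adj A)"
  define R where "R = cscale (- \<i> / 2) (A - adj A)"
  have "hermitian P" "hermitian R"
    by (simp_all add: P_def R_def hermitian_def adj_def cscale_def vec_eq_iff field_simps)
  have "A = P + cscale \<i> R"
    by (simp add: P_def R_def cscale_def vec_eq_iff field_simps)
  then have "Im (trace (R ** P)) + Re (trace (R ** R)) = 0"
    using assms[OF \<open>hermitian R\<close>]
    by (simp add: matrix_add_ldistrib trace_add cscale_matrix_mul_right trace_cscale)
  then have "frob_sq R = 0"
    using Im_trace_hermitian_mult[OF \<open>hermitian R\<close> \<open>hermitian P\<close>] \<open>hermitian R\<close>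
    by (simp add: frob_sq_def hermitian_def)
  then have "A - adj A = 0"
    by (simp add: frob_sq_eq_0_iff R_def cscale_def vec_eq_iff)
  then show ?thesis by (simp add: hermitian_def)
qed

lemma mat_matrix_vector_mult: "mat c *v x = c *s (x::'a::semiring_1^'n)"
  by (simp add: mat_def matrix_vector_mult_def vec_eq_iff if_distrib[of "\<lambda>a. a * _"] cong: if_cong)

lemma matrix_vector_mult_smult: "A *v (c *s x) = c *s (A *v (x::'a::comm_semiring_1^'n))"
  by (simp add: matrix_vector_mult_def vec_eq_iff sum_distrib_left mult.left_commute)

text \<open>The eigenvector is x - c A x for any x with A x \<noteq> c x.\<close>
lemma involution_eigenvalue:
  fixes A :: "'a::field^'n^'n"
  assumes "A ** A = mat 1" "c * c = 1" "A \<noteq> mat c"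
  shows "is_eigenvalue A (- c)"
proof -
  obtain x where x: "A *v x \<noteq> c *s x"
    using assms(3) matrix_eq[of A "mat c"] by (auto simp: mat_matrix_vector_mult)
  define w where "w = x - c *s (A *v x)"
  have "A *v w = A *v x - c *s x"
    by (simp add: w_def matrix_vector_mult_diff_distrib matrix_vector_mult_smult
        matrix_vector_mul_assoc assms(1))
  also have "\<dots> = (- c) *s w"
    by (simp add: w_def vec_eq_iff algebra_simps mult.assoc[symmetric] assms(2))
  finally have "A *v w = (- c) *s w" .
  moreover have "w \<noteq> 0"
  proof
    assume "w = 0"
    then have "x = c *s (A *v x)" by (simp add: w_def)
    then have "A *v x = c *s ((A ** A) *v x)"
      by (metis matrix_vector_mul_assoc matrix_vector_mult_smult)
    with x assms(1) show False by simp
  qed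
  ultimately show ?thesis unfolding is_eigenvalue_def by blast
qed

definition outer :: "complex^'n \<Rightarrow> complex^'n^'n" where
  "outer w = (\<chi> i j. w $ i * cnj (w $ j))"

lemma hermitian_outer: "hermitian (outer w)"
  by (simp add: hermitian_def adj_def outer_def vec_eq_iff mult.commute)

lemma power2_norm_vec: "norm w ^ 2 = (\<Sum>k\<in>UNIV. (norm (w $ k))\<^sup>2)"
  by (simp add: norm_vec_def L2_set_def sum_nonneg)

lemma Re_trace_outer_outer_eigenvector:
  assumes "hermitian A" and eig: "A *v w = of_real l *s w"
  shows "Re (trace (outer w ** (outer w ** A))) = l * norm w ^ 4"
proof -
  define c where "c = (\<Sum>k\<in>UNIV. cnj (w $ k) * w $ k)"
  have c: "c = of_real (norm w ^ 2)"
    unfolding c_def power2_norm_vec of_real_sum complex_norm_square by (simp add: mult.commute)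
  have row: "(\<Sum>k\<in>UNIV. cnj (w $ k) * A $ k $ j) = of_real l * cnj (w $ j)" for j
  proof -
    have "A $ k $ j = cnj (A $ j $ k)" for k
    proof -
      have "adj A $ k $ j = cnj (A $ j $ k)" by (simp add: adj_def)
      then show ?thesis using \<open>hermitian A\<close> by (simp add: hermitian_def)
    qed
    then have "(\<Sum>k\<in>UNIV. cnj (w $ k) * A $ k $ j) = cnj ((A *v w) $ j)"
      by (simp add: matrix_vector_mult_def cnj_sum mult.commute)
    then show ?thesis using eig by simp
  qed
  have "outer w ** A = cscale (of_real l) (outer w)"
  proof -
    have "(\<Sum>k\<in>UNIV. w $ i * cnj (w $ k) * A $ k $ j) = of_real l * (w $ i * cnj (w $ j))" for i j
    proof -
      have "(\<Sum>k\<in>UNIV. w $ i * cnj (w $ k) * A $ k $ j) = w $ i * (\<Sum>k\<in>UNIV. cnj (w $ k) * A $ k $ j)"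
        by (simp add: sum_distrib_left mult.assoc)
      then show ?thesis by (simp add: row mult_ac)
    qed
    then show ?thesis by (simp add: outer_def cscale_def matrix_matrix_mult_def vec_eq_iff)
  qed
  moreover have "outer w ** outer w = cscale c (outer w)"
  proof -
    have "(\<Sum>k\<in>UNIV. w $ i * cnj (w $ k) * (w $ k * cnj (w $ j))) = c * (w $ i * cnj (w $ j))" for i j
      unfolding c_def sum_distrib_right by (rule sum.cong) (simp_all add: mult_ac)
    then show ?thesis by (simp add: outer_def cscale_def matrix_matrix_mult_def vec_eq_iff)
  qed
  moreover have "trace (outer w) = c"
    by (simp add: trace_def outer_def c_def mult.commute)
  ultimately have "trace (outer w ** (outer w ** A)) = of_real l * (c * c)"
    by (simp add: cscale_matrix_mul_right trace_cscale)
  then show ?thesis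
    by (simp add: c)
qed

section \<open>Calculus in coordinates\<close>

definition restrict_coords :: "'p set \<Rightarrow> real^'p \<Rightarrow> real^'p" where
  "restrict_coords S h = (\<chi> a. if a \<in> S then h $ a else 0)"

lemma has_partial_imp_line_derivative:
  assumes "has_partial f b (p + t *\<^sub>R axis b 1) D"
  shows "((\<lambda>s. f (p + s *\<^sub>R axis b 1)) has_vector_derivative D) (at t)"
proof -
  have "((\<lambda>u. f (p + t *\<^sub>R axis b 1 + u *\<^sub>R axis b 1)) \<circ> (\<lambda>s. s - t)
      has_vector_derivative 1 *\<^sub>R D) (at t)"
    using assms unfolding has_partial_def
    by (intro vector_diff_chain_at) (auto intro!: derivative_eq_intros)
  moreover have "p + t *\<^sub>R axis b 1 + (s - t) *\<^sub>R axis b 1 = p + s *\<^sub>R axis b 1" for s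
    by (simp add: algebra_simps)
  ultimately show ?thesis by (simp add: o_def)
qed

lemma partial_increment_bound:
  fixes f :: "real^'p \<Rightarrow> 'b::real_normed_vector"
  assumes part: "\<And>y. has_partial f b y (g y)"
    and near: "\<And>t. \<bar>t\<bar> \<le> \<bar>s\<bar> \<Longrightarrow> norm (g (p + t *\<^sub>R axis b 1) - g x) \<le> e"
  shows "norm (f (p + s *\<^sub>R axis b 1) - f p - s *\<^sub>R g x) \<le> e * \<bar>s\<bar>"
proof -
  define \<phi> where "\<phi> t = f (p + t *\<^sub>R axis b 1) - t *\<^sub>R g x" for t
  have "(\<phi> has_vector_derivative g (p + t *\<^sub>R axis b 1) - g x) (at t)" for t
    unfolding \<phi>_def
    by (intro has_vector_derivative_diff has_partial_imp_line_derivative part)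
       (auto intro!: derivative_eq_intros)
  then have "(\<phi> has_derivative (\<lambda>i. i *\<^sub>R (g (p + t *\<^sub>R axis b 1) - g x)))
      (at t within closed_segment 0 s)" for t
    by (simp add: has_vector_derivative_def has_derivative_at_withinI)
  moreover have "onorm (\<lambda>i. i *\<^sub>R (g (p + t *\<^sub>R axis b 1) - g x)) \<le> e"
    if "t \<in> closed_segment 0 s" for t
  proof -
    have "\<bar>t\<bar> \<le> \<bar>s\<bar>"
      using that by (auto simp: closed_segment_eq_real_ivl split: if_splits)
    moreover have "onorm (\<lambda>i::real. i *\<^sub>R c) = norm c" for c :: 'b
      using onorm_scaleR_left[OF bounded_linear_ident] by (simp add: onorm_id)
    ultimately show ?thesis using near by simp
  qed
  ultimately have "norm (\<phi> s - \<phi> 0) \<le> e * norm (s - 0)"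
    by (intro differentiable_bound[OF convex_closed_segment]) auto
  then show ?thesis by (simp add: \<phi>_def algebra_simps)
qed

definition coordinate_linearization ::
    "(real^'p \<Rightarrow> 'b::real_normed_vector) \<Rightarrow> ('p \<Rightarrow> 'b) \<Rightarrow> real^'p \<Rightarrow> 'p set \<Rightarrow> bool" where
  "coordinate_linearization f G x S \<longleftrightarrow> (\<forall>e>0. \<exists>d>0. \<forall>h. norm h < d \<longrightarrow>
      norm (f (x + restrict_coords S h) - f x - (\<Sum>a\<in>S. h $ a *\<^sub>R G a)) \<le> e * norm h)"

lemma coordinate_linearization_empty: "coordinate_linearization f G x {}"
proof -
  have empty: "restrict_coords {} h = 0" for h
    by (simp add: restrict_coords_def vec_eq_iff)
  show ?thesis
    unfolding coordinate_linearization_def by (auto intro!: exI[of _ 1] simp: empty)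
qed

lemma coordinate_linearization_insert:
  fixes f :: "real^'p \<Rightarrow> 'b::real_normed_vector"
  assumes part: "\<And>y. has_partial f b y (g y)"
    and cont: "isCont g x"
    and "b \<notin> S"
    and lin: "coordinate_linearization f G x S"
  shows "coordinate_linearization f (G(b := g x)) x (insert b S)"
  unfolding coordinate_linearization_def
proof (intro allI impI)
  fix e :: real
  assume "e > 0"
  then obtain d1 where "d1 > 0" and d1: "\<And>h. norm h < d1 \<Longrightarrow>
      norm (f (x + restrict_coords S h) - f x - (\<Sum>a\<in>S. h $ a *\<^sub>R G a)) \<le> e/2 * norm h"
    using lin unfolding coordinate_linearization_def by (meson half_gt_zero)
  obtain d2 where "d2 > 0" and d2: "\<And>y. dist y x < d2 \<Longrightarrow> dist (g y) (g x) < e/2"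
    using cont \<open>e > 0\<close> unfolding continuous_at_eps_delta by (meson half_gt_zero)
  have "norm (f (x + restrict_coords (insert b S) h) - f x
      - (\<Sum>a\<in>insert b S. h $ a *\<^sub>R (G(b := g x)) a)) \<le> e * norm h"
    if h: "norm h < min d1 d2" for h
  proof -
    define p where "p = x + restrict_coords S h"
    define s where "s = h $ b"
    have "norm (restrict_coords S h + t *\<^sub>R axis b 1) \<le> norm h" if "\<bar>t\<bar> \<le> \<bar>s\<bar>" for t
      using that \<open>b \<notin> S\<close>
      by (intro norm_le_componentwise_cart) (auto simp: restrict_coords_def axis_def s_def)
    then have "dist (p + t *\<^sub>R axis b 1) x < d2" if "\<bar>t\<bar> \<le> \<bar>s\<bar>" for t
      using that h by (force simp: dist_norm p_def add.assoc)
    then have "norm (g (p + t *\<^sub>R axis b 1) - g x) \<le> e/2" if "\<bar>t\<bar> \<le> \<bar>s\<bar>" for t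
      using d2 that by (fastforce simp: dist_norm)
    then have A: "norm (f (p + s *\<^sub>R axis b 1) - f p - s *\<^sub>R g x) \<le> e/2 * \<bar>s\<bar>"
      by (rule partial_increment_bound[OF part])
    have B: "norm (f p - f x - (\<Sum>a\<in>S. h $ a *\<^sub>R G a)) \<le> e/2 * norm h"
      using d1 h by (simp add: p_def)
    have "x + restrict_coords (insert b S) h = p + s *\<^sub>R axis b 1"
      using \<open>b \<notin> S\<close> by (auto simp: vec_eq_iff restrict_coords_def p_def s_def axis_def)
    moreover have "(\<Sum>a\<in>insert b S. h $ a *\<^sub>R (G(b := g x)) a) = s *\<^sub>R g x + (\<Sum>a\<in>S. h $ a *\<^sub>R G a)"
      using \<open>b \<notin> S\<close> by (auto simp: s_def intro!: sum.cong)
    ultimately have "norm (f (x + restrict_coords (insert b S) h) - f x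
        - (\<Sum>a\<in>insert b S. h $ a *\<^sub>R (G(b := g x)) a))
      = norm ((f (p + s *\<^sub>R axis b 1) - f p - s *\<^sub>R g x) + (f p - f x - (\<Sum>a\<in>S. h $ a *\<^sub>R G a)))"
      by (simp add: algebra_simps)
    also have "\<dots> \<le> e/2 * \<bar>s\<bar> + e/2 * norm h"
      using norm_triangle_ineq A B by (rule order_trans[OF _ add_mono])
    also have "\<dots> \<le> e * norm h"
      using component_le_norm_cart[of h b] \<open>e > 0\<close> by (simp add: s_def field_simps)
    finally show ?thesis .
  qed
  then show "\<exists>d>0. \<forall>h. norm h < d \<longrightarrow> norm (f (x + restrict_coords (insert b S) h) - f x
      - (\<Sum>a\<in>insert b S. h $ a *\<^sub>R (G(b := g x)) a)) \<le> e * norm h"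
    using \<open>d1 > 0\<close> \<open>d2 > 0\<close> by (intro exI[of _ "min d1 d2"]) auto
qed

lemma has_derivative_of_continuous_partials:
  fixes f :: "real^'p \<Rightarrow> 'b::real_normed_vector"
  assumes part: "\<And>a y. has_partial f a y (g a y)"
    and cont: "\<And>a. continuous_on UNIV (g a)"
  shows "(f has_derivative (\<lambda>h. \<Sum>a\<in>UNIV. h $ a *\<^sub>R g a x)) (at x)"
proof -
  have "coordinate_linearization f (\<lambda>a. g a x) x S" for S
  proof (induction S rule: finite_induct[OF finite])
    case 1
    show ?case by (rule coordinate_linearization_empty)
  next
    case (2 b S)
    have "coordinate_linearization f ((\<lambda>a. g a x)(b := g b x)) x (insert b S)"
      by (rule coordinate_linearization_insert[where g = "g b"])
        (use part 2 cont[of b] in \<open>auto simp: continuous_on_eq_continuous_at\<close>)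
    moreover have "(\<lambda>a. g a x)(b := g b x) = (\<lambda>a. g a x)"
      by (simp add: fun_eq_iff)
    ultimately show ?case
      by simp
  qed
  moreover have "restrict_coords UNIV h = h" for h
    by (simp add: restrict_coords_def)
  ultimately have estimate: "\<forall>e>0. \<exists>d>0. \<forall>h. norm h < d \<longrightarrow>
      norm (f (x + h) - f x - (\<Sum>a\<in>UNIV. h $ a *\<^sub>R g a x)) \<le> e * norm h"
    unfolding coordinate_linearization_def by metis
  have "\<forall>e>0. \<exists>d>0. \<forall>y. norm (y - x) < d \<longrightarrow>
      norm (f y - f x - (\<Sum>a\<in>UNIV. (y - x) $ a *\<^sub>R g a x)) \<le> e * norm (y - x)"
  proof (intro allI impI)
    fix e :: real
    assume "e > 0"
    with estimate obtain d where "d > 0" and d: "\<And>h. norm h < d \<Longrightarrow>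
        norm (f (x + h) - f x - (\<Sum>a\<in>UNIV. h $ a *\<^sub>R g a x)) \<le> e * norm h"
      by blast
    show "\<exists>d>0. \<forall>y. norm (y - x) < d \<longrightarrow>
        norm (f y - f x - (\<Sum>a\<in>UNIV. (y - x) $ a *\<^sub>R g a x)) \<le> e * norm (y - x)"
      using \<open>d > 0\<close> d[of "_ - x"] by auto
  qed
  moreover have "bounded_linear (\<lambda>h::real^'p. \<Sum>a\<in>UNIV. h $ a *\<^sub>R g a x)"
    by (simp add: linear_conv_bounded_linear[symmetric] linearI sum.distrib
        scaleR_add_left scaleR_sum_right)
  ultimately show ?thesis
    unfolding has_derivative_at_alt by blast
qed

lemma has_vector_derivative_along_line:
  assumes "(F has_derivative F') (at (x + t *\<^sub>R v))"
  shows "((\<lambda>s. F (x + s *\<^sub>R v)) has_vector_derivative F' v) (at t)"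
proof -
  have "((F \<circ> (\<lambda>s. x + s *\<^sub>R v)) has_derivative (F' \<circ> (\<lambda>s. s *\<^sub>R v))) (at t)"
    using assms by (intro diff_chain_at) (auto intro!: derivative_eq_intros)
  moreover have "F' \<circ> (\<lambda>s. s *\<^sub>R v) = (\<lambda>s. s *\<^sub>R F' v)"
    using has_derivative_bounded_linear[OF assms] by (auto simp: o_def linear_simps)
  ultimately show ?thesis by (simp add: has_vector_derivative_def o_def)
qed

lemma has_derivative_fixed_by_bounded_linear:
  assumes "bounded_linear T" "\<And>y. T (f y) = f y" "(f has_derivative D) (at x)"
  shows "T (D h) = D h"
proof -
  have "((\<lambda>y. T (f y)) has_derivative (\<lambda>h. T (D h))) (at x)"
    using bounded_linear.has_derivative[OF assms(1,3)] .
  then have "(f has_derivative (\<lambda>h. T (D h))) (at x)"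
    using assms(2) by simp
  then show ?thesis
    using has_derivative_unique[OF assms(3)] by metis
qed

lemma span_range_eq_sums:
  fixes g :: "'p::finite \<Rightarrow> 'b::real_vector"
  shows "span (range g) = range (\<lambda>v::real^'p. \<Sum>a\<in>UNIV. v $ a *\<^sub>R g a)"
proof -
  define F where "F v = (\<Sum>a\<in>UNIV. v $ a *\<^sub>R g a)" for v :: "real^'p"
  have "linear F"
    by (rule linearI) (simp_all add: F_def sum.distrib scaleR_add_left scaleR_sum_right)
  have "F (axis a 1) = g a" for a
    by (simp add: F_def axis_def if_distrib[of "\<lambda>r. r *\<^sub>R _"] cong: if_cong)
  then have "range g = F ` Basis"
    by (auto simp: Basis_vec_def image_iff)
  then show ?thesis
    using linear_span_image[OF \<open>linear F\<close>, of Basis] by (simp add: F_def span_Basis)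
qed

section \<open>Symmetric matrices and second-order tests\<close>

lemma inner_symmetric_matrix:
  fixes H :: "real^'p^'p"
  assumes "transpose H = H"
  shows "x \<bullet> (H *v y) = y \<bullet> (H *v x)"
  by (metis assms dot_lmul_matrix inner_commute transpose_matrix_vector)

lemma nonpos_quadratic_imp_zero:
  fixes a c :: real
  assumes "a \<ge> 0" "\<And>t. 2 * t * a + t\<^sup>2 * c \<le> 0"
  shows "a = 0"
proof (rule ccontr)
  assume "a \<noteq> 0"
  with assms(1) have "a > 0" by simp
  define t where "t = a / (\<bar>c\<bar> + 1)"
  have "t > 0" "t * (\<bar>c\<bar> + 1) = a"
    using \<open>a > 0\<close> by (simp_all add: t_def)
  have "t\<^sup>2 * (\<bar>c\<bar> + 1) = t * a"
    using \<open>t * (\<bar>c\<bar> + 1) = a\<close> by (metis mult.assoc power2_eq_square)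
  then have "- (t * a) = t\<^sup>2 * (- (\<bar>c\<bar> + 1))"
    by (simp only: mult_minus_right)
  also have "\<dots> \<le> t\<^sup>2 * c"
    by (rule mult_left_mono) auto
  finally have "- (t * a) \<le> t\<^sup>2 * c" .
  moreover have "t * a > 0"
    using \<open>t > 0\<close> \<open>a > 0\<close> by simp
  ultimately show False
    using assms(2)[of t] by simp
qed

text \<open>l |u|^2 - u H u is a nonnegative quadratic form vanishing at v, so its linear
  part 2 u (l v - H v) at v must vanish.\<close>
lemma eigenvector_if_quadratic_form_attains_bound:
  fixes H :: "real^'p^'p"
  assumes sym: "transpose H = H"
    and bound: "\<And>u. u \<bullet> (H *v u) \<le> l * (u \<bullet> u)"
    and attained: "v \<bullet> (H *v v) = l * (v \<bullet> v)"
  shows "H *v v = l *s v"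
proof -
  define r where "r = H *v v - l *\<^sub>R v"
  have "2 * t * (r \<bullet> r) + t\<^sup>2 * (r \<bullet> (H *v r) - l * (r \<bullet> r)) \<le> 0" for t
  proof -
    have "(v + t *\<^sub>R r) \<bullet> (v + t *\<^sub>R r) = v \<bullet> v + 2 * t * (r \<bullet> v) + t\<^sup>2 * (r \<bullet> r)"
      by (simp add: inner_add_left inner_add_right inner_commute power2_eq_square algebra_simps)
    moreover have "(v + t *\<^sub>R r) \<bullet> (H *v (v + t *\<^sub>R r))
        = v \<bullet> (H *v v) + 2 * t * (r \<bullet> (H *v v)) + t\<^sup>2 * (r \<bullet> (H *v r))"
      using inner_symmetric_matrix[OF sym, of v r]
      by (simp add: matrix_vector_right_distrib matrix_vector_mult_scaleR
          inner_add_left inner_add_right power2_eq_square algebra_simps)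
    moreover have "r \<bullet> (H *v v) = r \<bullet> r + l * (r \<bullet> v)"
      by (simp add: r_def inner_diff_right algebra_simps)
    ultimately have "(v + t *\<^sub>R r) \<bullet> (H *v (v + t *\<^sub>R r)) - l * ((v + t *\<^sub>R r) \<bullet> (v + t *\<^sub>R r))
        = 2 * t * (r \<bullet> r) + t\<^sup>2 * (r \<bullet> (H *v r) - l * (r \<bullet> r))"
      using attained by (simp add: algebra_simps)
    then show ?thesis
      using bound[of "v + t *\<^sub>R r"] by linarith
  qed
  then have "r \<bullet> r = 0"
    by (intro nonpos_quadratic_imp_zero) auto
  then show ?thesis
    by (simp add: r_def scalar_mult_eq_scaleR)
qed

lemma symmetric_matrix_pos_eigenvalue:
  fixes H :: "real^'p^'p"
  assumes sym: "transpose H = H" and pos: "v \<bullet> (H *v v) > 0"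
  shows "\<exists>l>0. is_eigenvalue H l"
proof -
  define q where "q u = u \<bullet> (H *v u)" for u
  have q_scale: "q (c *\<^sub>R u) = c\<^sup>2 * q u" for c u
    by (simp add: q_def matrix_vector_mult_scaleR power2_eq_square)
  have "axis undefined 1 \<in> sphere (0::real^'p) 1"
    by simp
  then have "sphere (0::real^'p) 1 \<noteq> {}"
    by blast
  moreover have "continuous_on (sphere 0 1) q"
    unfolding q_def by (intro continuous_intros linear_continuous_on matrix_vector_mul_bounded_linear)
  ultimately obtain v0 where v0: "norm v0 = 1" and max: "\<And>y. norm y = 1 \<Longrightarrow> q y \<le> q v0"
    using continuous_attains_sup[OF compact_sphere] by (metis mem_sphere_0)
  define l where "l = q v0"
  have le: "q u \<le> l * (u \<bullet> u)" for u
  proof (cases "u = 0")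
    case False
    then have "q ((1 / norm u) *\<^sub>R u) \<le> l"
      using max by (simp add: l_def)
    then show ?thesis
      using False by (simp add: q_scale power_divide divide_le_eq power2_norm_eq_inner mult.commute)
  qed (simp add: q_def)
  have "l > 0"
  proof -
    have "v \<noteq> 0" using pos by auto
    have "0 < q v / (norm v)\<^sup>2"
      using pos \<open>v \<noteq> 0\<close> by (simp add: q_def)
    also have "\<dots> = q ((1 / norm v) *\<^sub>R v)"
      by (simp add: q_scale power_divide)
    also have "\<dots> \<le> l"
      using max \<open>v \<noteq> 0\<close> by (simp add: l_def)
    finally show ?thesis .
  qed
  moreover have "H *v v0 = l *s v0"
    using le v0 by (intro eigenvector_if_quadratic_form_attains_bound[OF sym])
      (simp_all add: q_def l_def power2_norm_eq_inner[symmetric])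
  moreover have "v0 \<noteq> 0" using v0 by auto
  ultimately show ?thesis unfolding is_eigenvalue_def by blast
qed

lemma symmetric_matrix_neg_eigenvalue:
  fixes H :: "real^'p^'p"
  assumes sym: "transpose H = H" and neg: "v \<bullet> (H *v v) < 0"
  shows "\<exists>l<0. is_eigenvalue H l"
proof -
  have uminus_mv: "(- H) *v u = - (H *v u)" for u
    by (simp add: vec_eq_iff matrix_vector_mult_def sum_negf)
  have "transpose (- H) = - H"
    using sym by (simp add: transpose_def vec_eq_iff)
  moreover have "v \<bullet> ((- H) *v v) > 0"
    using neg by (simp add: uminus_mv)
  ultimately obtain l w where "l > 0" "w \<noteq> 0" "(- H) *v w = l *s w"
    using symmetric_matrix_pos_eigenvalue unfolding is_eigenvalue_def by blast
  then have "H *v w = (- l) *s w"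
    by (metis uminus_mv minus_minus vector_smult_lneg)
  with \<open>l > 0\<close> \<open>w \<noteq> 0\<close> show ?thesis
    unfolding is_eigenvalue_def by (intro exI[of _ "- l"]) auto
qed

lemma local_min_iff_local_max_uminus: "local_min f x \<longleftrightarrow> local_max (\<lambda>y. - f y) x"
  by (simp add: local_min_def local_max_def)

lemma local_max_along_line:
  assumes "local_max f x"
  obtains d where "d > 0" "\<And>t. \<bar>t\<bar> < d \<Longrightarrow> f (x + t *\<^sub>R v) \<le> f x"
proof -
  obtain e where "e > 0" and e: "\<And>y. dist y x < e \<Longrightarrow> f y \<le> f x"
    using assms unfolding local_max_def by blast
  define d where "d = e / (norm v + 1)"
  have "norm v + 1 > 0"
    using norm_ge_zero[of v] by linarith
  have "\<bar>t\<bar> * norm v < e" if "\<bar>t\<bar> < d" for t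
  proof -
    have "\<bar>t\<bar> * norm v \<le> d * norm v"
      using that by (simp add: mult_right_mono)
    also have "\<dots> = e * (norm v / (norm v + 1))"
      by (simp add: d_def)
    also have "\<dots> < e"
      using \<open>e > 0\<close> \<open>norm v + 1 > 0\<close> by (simp add: mult_less_cancel_left1 divide_less_eq)
    finally show ?thesis .
  qed
  then show ?thesis
    using \<open>e > 0\<close> \<open>norm v + 1 > 0\<close> e by (intro that[of d]) (auto simp: d_def dist_norm)
qed

lemma not_local_max_if_second_derivative_pos:
  assumes deriv: "\<And>t. ((\<lambda>s. f (x + s *\<^sub>R v)) has_real_derivative g t) (at t)"
    and "g 0 = 0" and deriv2: "(g has_real_derivative c) (at 0)" and "c > 0"
  shows "\<not> local_max f x"
proof
  assume "local_max f x"
  then obtain d where "d > 0" and d: "\<And>t. \<bar>t\<bar> < d \<Longrightarrow> f (x + t *\<^sub>R v) \<le> f x"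
    using local_max_along_line[where v = v] by metis
  obtain d1 where "d1 > 0" and d1: "\<And>h. h > 0 \<Longrightarrow> h < d1 \<Longrightarrow> g 0 < g (0 + h)"
    using DERIV_pos_inc_right[OF deriv2 \<open>c > 0\<close>] by blast
  define t where "t = min d d1 / 2"
  have "0 < t" "t < d" "t < d1"
    using \<open>d > 0\<close> \<open>d1 > 0\<close> by (auto simp: t_def)
  then obtain z where "0 < z" "z < t"
    and mvt: "f (x + t *\<^sub>R v) - f (x + 0 *\<^sub>R v) = (t - 0) * g z"
    using MVT2[of 0 t "\<lambda>s. f (x + s *\<^sub>R v)" g] deriv by blast
  have "g z > 0"
    using d1[of z] \<open>0 < z\<close> \<open>z < t\<close> \<open>t < d1\<close> \<open>g 0 = 0\<close> by simp
  then have "f x < f (x + t *\<^sub>R v)"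
    using mvt mult_pos_pos[OF \<open>0 < t\<close> \<open>g z > 0\<close>] by simp
  with d[of t] \<open>0 < t\<close> \<open>t < d\<close> show False by simp
qed

lemma has_partial_zero_if_local_max:
  assumes "local_max f x" "has_partial f a x D"
  shows "D = 0"
proof -
  obtain d where "d > 0" and d: "\<And>t. \<bar>t\<bar> < d \<Longrightarrow> f (x + t *\<^sub>R axis a 1) \<le> f x"
    using local_max_along_line[OF assms(1), where v = "axis a 1"] by metis
  have "((\<lambda>t. f (x + t *\<^sub>R axis a 1)) has_real_derivative D) (at 0)"
    using assms(2) by (simp add: has_partial_def has_real_derivative_iff_has_vector_derivative)
  then show ?thesis
    by (rule DERIV_local_max[OF _ \<open>d > 0\<close>]) (use d in \<open>auto simp: dist_real_def\<close>)
qed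

section \<open>The landscape of an analog ansatz\<close>

locale analog_ansatz =
  fixes U :: "real^'p \<Rightarrow> complex^'n^'n"
    and \<mu> :: "'p \<Rightarrow> real^'p \<Rightarrow> complex^'n^'n"
    and W :: "complex^'n^'n"
  assumes U_unitary: "\<And>\<theta>. unitary (U \<theta>)"
    and U_cont: "continuous_on UNIV U"
    and U_deriv: "\<And>a \<theta>. has_partial U a \<theta> (cscale (- \<i>) (U \<theta> ** \<mu> a \<theta>))"
    and \<mu>_C1: "\<And>a. Ck 1 (\<mu> a)"
    and W_unitary: "unitary W"
    and surj: "\<And>\<theta>. span (range (\<lambda>a. \<mu> a \<theta>)) = {H. hermitian H}"
begin

definition L :: "real^'p \<Rightarrow> real" where
  "L \<theta> = frob_sq (U \<theta> - W)"

definition X :: "real^'p \<Rightarrow> complex^'n^'n" where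
  "X \<theta> = adj (U \<theta>) ** W"

text \<open>The paper's \<mu>_v = \<Sum>_a v_a \<mu>_a: the derivative of U along v is -i U \<mu>_v.\<close>
definition gen :: "real^'p \<Rightarrow> real^'p \<Rightarrow> complex^'n^'n" where
  "gen \<theta> v = (\<Sum>a\<in>UNIV. v $ a *\<^sub>R \<mu> a \<theta>)"

text \<open>Half the slope of L along v, and half the Hessian form of L at a point where X is Hermitian.\<close>
definition slope :: "real^'p \<Rightarrow> real^'p \<Rightarrow> real" where
  "slope \<theta> v = Im (trace (gen \<theta> v ** X \<theta>))"

definition curv :: "real^'p \<Rightarrow> real^'p \<Rightarrow> real^'p \<Rightarrow> real" where
  "curv \<theta> v h = Re (trace (gen \<theta> v ** (gen \<theta> h ** X \<theta>)))"

lemma gen_axis: "gen \<theta> (axis b 1) = \<mu> b \<theta>"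
  by (simp add: gen_def axis_def if_distrib[of "\<lambda>r. r *\<^sub>R _"] cong: if_cong)

lemma range_gen: "range (gen \<theta>) = {H. hermitian H}"
  using span_range_eq_sums[of "\<lambda>a. \<mu> a \<theta>"] surj by (simp add: gen_def[abs_def])

lemma hermitian_gen: "hermitian (gen \<theta> v)"
  using range_gen[of \<theta>] by blast

lemma hermitian_\<mu>: "hermitian (\<mu> a \<theta>)"
  using hermitian_gen[of \<theta> "axis a 1"] by (simp add: gen_axis)

lemma U_has_derivative: "(U has_derivative (\<lambda>h. cscale (- \<i>) (U \<theta> ** gen \<theta> h))) (at \<theta>)"
proof -
  have "continuous_on UNIV (\<mu> a)" for a
    using \<mu>_C1[of a] by (simp add: One_nat_def)
  then have "continuous_on UNIV (\<lambda>\<theta>. cscale (- \<i>) (U \<theta> ** \<mu> a \<theta>))" for a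
    by (intro bounded_linear.continuous_on[OF bounded_linear_cscale]
        bounded_bilinear.continuous_on[OF bounded_bilinear_matrix_mul U_cont])
  then have "(U has_derivative (\<lambda>h. \<Sum>a\<in>UNIV. h $ a *\<^sub>R cscale (- \<i>) (U \<theta> ** \<mu> a \<theta>))) (at \<theta>)"
    by (rule has_derivative_of_continuous_partials[OF U_deriv])
  moreover have "(\<Sum>a\<in>UNIV. h $ a *\<^sub>R cscale (- \<i>) (U \<theta> ** \<mu> a \<theta>))
      = cscale (- \<i>) (U \<theta> ** gen \<theta> h)" for h
    by (simp add: gen_def linear_sum[OF bounded_linear.linear[OF bounded_linear_cscale]]
        linear.scaleR[OF bounded_linear.linear[OF bounded_linear_cscale]]
        bounded_bilinear.sum_right[OF bounded_bilinear_matrix_mul]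
        bounded_bilinear.scaleR_right[OF bounded_bilinear_matrix_mul])
  ultimately show ?thesis by simp
qed

lemma gen_has_derivative:
  obtains D where "((\<lambda>\<theta>. gen \<theta> v) has_derivative D) (at \<theta>)" "\<And>h. hermitian (D h)"
proof -
  obtain D where D: "((\<lambda>\<theta>. gen \<theta> v) has_derivative D) (at \<theta>)"
  proof -
    have "\<exists>g. (\<forall>y. has_partial (\<mu> a) b y (g y)) \<and> continuous_on UNIV g" for a b
      using \<mu>_C1[of a] by (simp add: One_nat_def)
    then obtain g where "\<And>a b y. has_partial (\<mu> a) b y (g a b y)"
      "\<And>a b. continuous_on UNIV (g a b)"
      by metis
    then have "(\<mu> a has_derivative (\<lambda>h. \<Sum>b\<in>UNIV. h $ b *\<^sub>R g a b \<theta>)) (at \<theta>)" for a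
      by (intro has_derivative_of_continuous_partials)
    then have "((\<lambda>\<theta>. gen \<theta> v) has_derivative
        (\<lambda>h. \<Sum>a\<in>UNIV. v $ a *\<^sub>R (\<Sum>b\<in>UNIV. h $ b *\<^sub>R g a b \<theta>))) (at \<theta>)"
      unfolding gen_def by (intro has_derivative_sum has_derivative_scaleR_right)
    then show ?thesis by (rule that)
  qed
  moreover have "adj (gen \<theta> v) = gen \<theta> v" for \<theta>
    using hermitian_gen unfolding hermitian_def .
  then have "hermitian (D h)" for h
    using has_derivative_fixed_by_bounded_linear[OF bounded_linear_adj _ D]
    unfolding hermitian_def by blast
  ultimately show ?thesis by (rule that)
qed

lemma X_unitary: "unitary (X \<theta>)"
  unfolding X_def by (intro unitary_mult unitary_adj U_unitary W_unitary)

lemma U_mult_X: "U \<theta> ** X \<theta> = W"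
  using U_unitary[of \<theta>] by (simp add: X_def unitary_def matrix_mul_assoc)

lemma X_eq_mat_1_iff: "X \<theta> = mat 1 \<longleftrightarrow> U \<theta> = W"
  using U_mult_X[of \<theta>] W_unitary by (auto simp: X_def unitary_def)

lemma X_eq_mat_minus_1_iff: "X \<theta> = mat (- 1) \<longleftrightarrow> U \<theta> = - W"
  using U_mult_X[of \<theta>] W_unitary
  by (auto simp: X_def unitary_def mat_minus_one adj_uminus matrix_mul_uminus_left
      matrix_mul_uminus_right)

lemma L_eq_Re_trace_X: "L \<theta> = 2 * CARD('n) - 2 * Re (trace (X \<theta>))"
  unfolding L_def X_def using frob_sq_diff_unitary[OF U_unitary W_unitary] by simp

lemma L_nonneg: "L \<theta> \<ge> 0"
  unfolding L_def by (rule frob_sq_nonneg)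

lemma L_le: "L \<theta> \<le> 4 * CARD('n)"
  using frob_sq_nonneg[of "U \<theta> - (- W)"]
    frob_sq_diff_unitary[OF U_unitary unitary_uminus[OF W_unitary], of \<theta>]
  by (simp add: L_eq_Re_trace_X X_def matrix_mul_uminus_right trace_uminus)

lemma X_has_vector_derivative_along_line:
  "((\<lambda>s. X (\<theta> + s *\<^sub>R v)) has_vector_derivative
     cscale \<i> (gen (\<theta> + t *\<^sub>R v) v ** X (\<theta> + t *\<^sub>R v))) (at t)"
proof -
  have "bounded_linear (\<lambda>A::complex^'n^'n. adj A ** W)"
    using bounded_linear_compose[OF bounded_bilinear.bounded_linear_left[OF
          bounded_bilinear_matrix_mul, where b = W] bounded_linear_adj]
    by (simp add: o_def)
  from bounded_linear.has_vector_derivative[OF this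
      has_vector_derivative_along_line[OF U_has_derivative]]
  have "((\<lambda>s. X (\<theta> + s *\<^sub>R v)) has_vector_derivative
      adj (cscale (- \<i>) (U (\<theta> + t *\<^sub>R v) ** gen (\<theta> + t *\<^sub>R v) v)) ** W) (at t)"
    by (simp add: X_def)
  moreover have "adj (cscale (- \<i>) (U y ** gen y v)) ** W = cscale \<i> (gen y v ** X y)" for y
    using hermitian_gen[unfolded hermitian_def]
    by (simp add: X_def adj_cscale adj_mult cscale_matrix_mul_left matrix_mul_assoc)
  ultimately show ?thesis by simp
qed

lemma L_has_derivative_along_line:
  "((\<lambda>s. L (\<theta> + s *\<^sub>R v)) has_real_derivative 2 * slope (\<theta> + t *\<^sub>R v) v) (at t)"
proof -
  have "bounded_linear (\<lambda>A::complex^'n^'n. Re (trace A))"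
    using bounded_linear_compose[OF bounded_linear_Re bounded_linear_trace] by (simp add: o_def)
  from bounded_linear.has_vector_derivative[OF this X_has_vector_derivative_along_line]
  have "((\<lambda>s. Re (trace (X (\<theta> + s *\<^sub>R v)))) has_vector_derivative - slope (\<theta> + t *\<^sub>R v) v) (at t)"
    by (simp add: slope_def trace_cscale)
  then have "((\<lambda>s. Re (trace (X (\<theta> + s *\<^sub>R v)))) has_real_derivative - slope (\<theta> + t *\<^sub>R v) v) (at t)"
    by (simp add: has_real_derivative_iff_has_vector_derivative)
  then have "((\<lambda>s. 2 * real CARD('n) - 2 * Re (trace (X (\<theta> + s *\<^sub>R v)))) has_real_derivative
      0 - 2 * (- slope (\<theta> + t *\<^sub>R v) v)) (at t)"
    by (intro DERIV_diff DERIV_const DERIV_cmult)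
  then show ?thesis
    unfolding L_eq_Re_trace_X by simp
qed

lemma L_has_partial: "has_partial L a \<theta> (2 * slope \<theta> (axis a 1))"
  using L_has_derivative_along_line[of \<theta> "axis a 1" 0]
  by (simp add: has_partial_def has_real_derivative_iff_has_vector_derivative)

lemma pderiv_L: "pderiv L a \<theta> = 2 * slope \<theta> (axis a 1)"
  using L_has_partial unfolding has_partial_def pderiv_def by (rule vector_derivative_at)

text \<open>At a critical point Im Tr(\<mu>_a X) = 0 for every generator, hence by local
  surjectivity for every Hermitian matrix.\<close>
lemma critical_point_imp_hermitian_X:
  assumes "critical_point L \<theta>"
  shows "hermitian (X \<theta>)"
proof (rule hermitian_if_Im_trace_vanishes)
  fix H :: "complex^'n^'n"
  assume "hermitian H"
  then obtain v where "H = gen \<theta> v"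
    using range_gen by blast
  have "slope \<theta> (axis a 1) = 0" for a
    using assms L_has_partial[of a \<theta>] vector_derivative_unique_at
    unfolding critical_point_def has_partial_def by fastforce
  then have "Im (trace (\<mu> a \<theta> ** X \<theta>)) = 0" for a
    by (simp add: slope_def gen_axis)
  then show "Im (trace (H ** X \<theta>)) = 0"
    by (simp add: \<open>H = gen \<theta> v\<close> slope_def gen_axis gen_def
        bounded_bilinear.sum_left[OF bounded_bilinear_matrix_mul]
        bounded_bilinear.scaleR_left[OF bounded_bilinear_matrix_mul]
        linear_sum[OF bounded_linear.linear[OF bounded_linear_trace]]
        linear.scaleR[OF bounded_linear.linear[OF bounded_linear_trace]] Im_sum)
qed

lemma slope_eq_0: "hermitian (X \<theta>) \<Longrightarrow> slope \<theta> v = 0"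
  unfolding slope_def by (rule Im_trace_hermitian_mult[OF hermitian_gen])

text \<open>The Hermitian derivative of \<mu>_v contributes nothing to the second derivative
  once X is Hermitian, so only the term from differentiating X survives.\<close>
lemma slope_has_derivative_along_line:
  assumes "hermitian (X \<theta>)"
  shows "((\<lambda>s. slope (\<theta> + s *\<^sub>R h) v) has_real_derivative curv \<theta> v h) (at 0)"
proof -
  obtain D where D: "((\<lambda>\<theta>. gen \<theta> v) has_derivative D) (at \<theta>)" and "hermitian (D h)"
    using gen_has_derivative[of v \<theta>] by metis
  have "((\<lambda>s. gen (\<theta> + s *\<^sub>R h) v ** X (\<theta> + s *\<^sub>R h)) has_vector_derivative
      gen \<theta> v ** cscale \<i> (gen \<theta> h ** X \<theta>) + D h ** X \<theta>) (at 0)"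
    using bounded_bilinear.has_vector_derivative[OF bounded_bilinear_matrix_mul
        has_vector_derivative_along_line[where t = 0, OF _] X_has_vector_derivative_along_line[where t = 0]]
      D by simp
  moreover have "bounded_linear (\<lambda>A::complex^'n^'n. Im (trace A))"
    using bounded_linear_compose[OF bounded_linear_Im bounded_linear_trace] by (simp add: o_def)
  ultimately have "((\<lambda>s. slope (\<theta> + s *\<^sub>R h) v) has_vector_derivative
      Im (trace (gen \<theta> v ** cscale \<i> (gen \<theta> h ** X \<theta>) + D h ** X \<theta>))) (at 0)"
    unfolding slope_def by (rule bounded_linear.has_vector_derivative[rotated])
  moreover have "Im (trace (gen \<theta> v ** cscale \<i> (gen \<theta> h ** X \<theta>) + D h ** X \<theta>)) = curv \<theta> v h"
    using Im_trace_hermitian_mult[OF \<open>hermitian (D h)\<close> assms]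
    by (simp add: trace_add cscale_matrix_mul_right trace_cscale curv_def)
  ultimately show ?thesis
    by (simp add: has_real_derivative_iff_has_vector_derivative)
qed


lemma hessian_L_entry:
  assumes "hermitian (X \<theta>)"
  shows "hessian L \<theta> $ a $ b = 2 * Re (trace (\<mu> b \<theta> ** (\<mu> a \<theta> ** X \<theta>)))"
proof -
  have "((\<lambda>s. 2 * slope (\<theta> + s *\<^sub>R axis a 1) (axis b 1)) has_real_derivative
      2 * curv \<theta> (axis b 1) (axis a 1)) (at 0)"
    by (intro DERIV_cmult slope_has_derivative_along_line assms)
  then have "pderiv (\<lambda>y. 2 * slope y (axis b 1)) a \<theta> = 2 * curv \<theta> (axis b 1) (axis a 1)"
    unfolding pderiv_def has_real_derivative_iff_has_vector_derivative by (rule vector_derivative_at)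
  then show ?thesis
    by (simp add: hessian_def pderiv_L curv_def gen_axis)
qed

lemma hessian_L_symmetric:
  assumes "hermitian (X \<theta>)"
  shows "transpose (hessian L \<theta>) = hessian L \<theta>"
  using Re_trace_hermitian_swap[OF hermitian_\<mu> hermitian_\<mu> assms]
  by (simp add: transpose_def vec_eq_iff hessian_L_entry[OF assms])

lemma curv_expand:
  "curv \<theta> v h = (\<Sum>a\<in>UNIV. \<Sum>b\<in>UNIV. h $ a * (v $ b * Re (trace (\<mu> b \<theta> ** (\<mu> a \<theta> ** X \<theta>)))))"
  by (simp add: curv_def gen_def
      bounded_bilinear.sum_left[OF bounded_bilinear_matrix_mul]
      bounded_bilinear.sum_right[OF bounded_bilinear_matrix_mul]
      bounded_bilinear.scaleR_left[OF bounded_bilinear_matrix_mul]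
      bounded_bilinear.scaleR_right[OF bounded_bilinear_matrix_mul]
      linear_sum[OF bounded_linear.linear[OF bounded_linear_trace]]
      linear.scaleR[OF bounded_linear.linear[OF bounded_linear_trace]]
      Re_sum sum_distrib_left)

lemma hessian_L_quadratic_form:
  assumes "hermitian (X \<theta>)"
  shows "v \<bullet> (hessian L \<theta> *v v) = 2 * curv \<theta> v v"
  by (simp add: inner_vec_def matrix_vector_mult_def hessian_L_entry[OF assms] curv_expand
      sum_distrib_left mult_ac)

text \<open>Testing along the direction whose generator is the projector onto an
  eigenvector of X gives curvature of the sign of the eigenvalue.\<close>
lemma curv_eigenvalue:
  assumes "hermitian (X \<theta>)" "is_eigenvalue (X \<theta>) (of_real l)"
  obtains v r where "curv \<theta> v v = l * r" "r > 0"
proof -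
  obtain w where "w \<noteq> 0" "X \<theta> *v w = of_real l *s w"
    using assms(2) unfolding is_eigenvalue_def by blast
  moreover obtain v where "outer w = gen \<theta> v"
    using range_gen hermitian_outer by blast
  ultimately have "curv \<theta> v v = l * norm w ^ 4" "norm w ^ 4 > 0"
    using Re_trace_outer_outer_eigenvector[OF assms(1)]
    by (simp_all add: curv_def flip: \<open>outer w = gen \<theta> v\<close>)
  then show ?thesis by (rule that)
qed

lemma X_involution: "hermitian (X \<theta>) \<Longrightarrow> X \<theta> ** X \<theta> = mat 1"
  using X_unitary[of \<theta>] by (simp add: unitary_def hermitian_def)

lemma eigenvalue_minus_1_X:
  assumes "hermitian (X \<theta>)" "U \<theta> \<noteq> W"
  shows "is_eigenvalue (X \<theta>) (- 1)"
  using involution_eigenvalue[OF X_involution[OF assms(1)], of 1] assms(2) X_eq_mat_1_iff by simp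

lemma eigenvalue_1_X:
  assumes "hermitian (X \<theta>)" "U \<theta> \<noteq> - W"
  shows "is_eigenvalue (X \<theta>) 1"
  using involution_eigenvalue[OF X_involution[OF assms(1)], of "- 1"] assms(2) X_eq_mat_minus_1_iff
  by simp

lemma not_local_max_if_curv_pos:
  assumes "hermitian (X \<theta>)" "curv \<theta> v v > 0"
  shows "\<not> local_max L \<theta>"
  using assms(2) slope_eq_0[OF assms(1)]
  by (intro not_local_max_if_second_derivative_pos[OF L_has_derivative_along_line _
        DERIV_cmult[OF slope_has_derivative_along_line[OF assms(1)]]]) auto

lemma not_local_min_if_curv_neg:
  assumes "hermitian (X \<theta>)" "curv \<theta> v v < 0"
  shows "\<not> local_min L \<theta>"
  unfolding local_min_iff_local_max_uminus
  using assms(2) slope_eq_0[OF assms(1)]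
  by (intro not_local_max_if_second_derivative_pos[OF DERIV_minus[OF L_has_derivative_along_line] _
        DERIV_minus[OF DERIV_cmult[OF slope_has_derivative_along_line[OF assms(1)]]]]) auto

lemma local_min_imp_critical_point:
  assumes "local_min L \<theta>"
  shows "critical_point L \<theta>"
  unfolding critical_point_def
proof
  fix a
  have "has_partial (\<lambda>y. - L y) a \<theta> (- (2 * slope \<theta> (axis a 1)))"
    using L_has_partial[of a \<theta>] by (simp add: has_partial_def has_vector_derivative_minus)
  then have "2 * slope \<theta> (axis a 1) = 0"
    using assms has_partial_zero_if_local_max by (force simp: local_min_iff_local_max_uminus)
  then show "has_partial L a \<theta> 0"
    using L_has_partial[of a \<theta>] by simp
qed

lemma global_min_at_W:
  assumes "U \<theta> = W"
  shows "pos_semidef (hessian L \<theta>) \<and> L \<theta> = 0 \<and> (\<forall>\<theta>'. L \<theta> \<le> L \<theta>')"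
proof -
  have "X \<theta> = mat 1"
    using assms X_eq_mat_1_iff by simp
  then have "hermitian (X \<theta>)"
    by (simp add: hermitian_def adj_def mat_def vec_eq_iff)
  have "curv \<theta> v v = frob_sq (gen \<theta> v)" for v
    using \<open>X \<theta> = mat 1\<close> hermitian_gen[of \<theta> v] by (simp add: curv_def frob_sq_def hermitian_def)
  then have "pos_semidef (hessian L \<theta>)"
    by (simp add: pos_semidef_def hessian_L_quadratic_form[OF \<open>hermitian (X \<theta>)\<close>] frob_sq_nonneg)
  moreover have "L \<theta> = 0"
    using assms by (simp add: L_def frob_sq_eq_0_iff)
  ultimately show ?thesis
    using L_nonneg by simp
qed

lemma global_max_at_minus_W:
  assumes "U \<theta> = - W"
  shows "neg_semidef (hessian L \<theta>) \<and> (\<forall>\<theta>'. L \<theta>' \<le> L \<theta>)"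
proof -
  have "X \<theta> = - mat 1"
    using assms X_eq_mat_minus_1_iff by (simp add: mat_minus_one)
  then have "hermitian (X \<theta>)"
    by (simp add: hermitian_def adj_uminus adj_def mat_def vec_eq_iff)
  have "curv \<theta> v v = - frob_sq (gen \<theta> v)" for v
    using \<open>X \<theta> = - mat 1\<close> hermitian_gen[of \<theta> v]
    by (simp add: curv_def frob_sq_def hermitian_def matrix_mul_uminus_right trace_uminus)
  then have "neg_semidef (hessian L \<theta>)"
    by (simp add: neg_semidef_def hessian_L_quadratic_form[OF \<open>hermitian (X \<theta>)\<close>] frob_sq_nonneg)
  moreover have "L \<theta> = 4 * CARD('n)"
    using \<open>X \<theta> = - mat 1\<close> by (simp add: L_eq_Re_trace_X trace_uminus trace_I)
  ultimately show ?thesis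
    using L_le by simp
qed

lemma saddle_point_otherwise:
  assumes "critical_point L \<theta>" "U \<theta> \<noteq> W" "U \<theta> \<noteq> - W"
  shows "is_eigenvalue (X \<theta>) 1 \<and> is_eigenvalue (X \<theta>) (- 1) \<and>
    (\<exists>l>0. is_eigenvalue (hessian L \<theta>) l) \<and> (\<exists>l<0. is_eigenvalue (hessian L \<theta>) l) \<and>
    saddle_point L \<theta>"
proof -
  have herm: "hermitian (X \<theta>)"
    using assms(1) by (rule critical_point_imp_hermitian_X)
  have "is_eigenvalue (X \<theta>) 1" "is_eigenvalue (X \<theta>) (- 1)"
    using eigenvalue_1_X[OF herm assms(3)] eigenvalue_minus_1_X[OF herm assms(2)] .
  then obtain vp vm rp rm where "curv \<theta> vp vp = 1 * rp" "rp > 0" "curv \<theta> vm vm = (- 1) * rm" "rm > 0"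
    using curv_eigenvalue[OF herm, of 1] curv_eigenvalue[OF herm, of "- 1"] by (metis of_real_1 of_real_minus)
  then have pos: "curv \<theta> vp vp > 0" and neg: "curv \<theta> vm vm < 0"
    by simp_all
  show ?thesis
    using \<open>is_eigenvalue (X \<theta>) 1\<close> \<open>is_eigenvalue (X \<theta>) (- 1)\<close> assms(1)
      symmetric_matrix_pos_eigenvalue[OF hessian_L_symmetric[OF herm], of vp]
      symmetric_matrix_neg_eigenvalue[OF hessian_L_symmetric[OF herm], of vm]
      not_local_max_if_curv_pos[OF herm pos] not_local_min_if_curv_neg[OF herm neg] pos neg
    by (simp add: hessian_L_quadratic_form[OF herm] saddle_point_def)
qed

lemma local_min_imp_global_min:
  assumes "local_min L \<theta>"
  shows "L \<theta> \<le> L \<theta>'"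
proof (cases "U \<theta> = W")
  case True
  then show ?thesis using global_min_at_W by blast
next
  case False
  have herm: "hermitian (X \<theta>)"
    using assms by (intro critical_point_imp_hermitian_X local_min_imp_critical_point)
  then obtain v r where "curv \<theta> v v = (- 1) * r" "r > 0"
    using curv_eigenvalue[OF herm, of "- 1"] eigenvalue_minus_1_X[OF herm False] by (metis of_real_1 of_real_minus)
  then have "curv \<theta> v v < 0" by simp
  with not_local_min_if_curv_neg[OF herm] assms show ?thesis by blast
qed

end

theorem mainTheorem7:
  fixes N :: nat
    and U :: "real^'p \<Rightarrow> complex^'n^'n"
    and \<mu> :: "'p \<Rightarrow> real^'p \<Rightarrow> complex^'n^'n"
    and W :: "complex^'n^'n"
    and \<theta>s :: "real^'p"
  assumes d: "CARD('n) = 2 ^ N"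
    and U_unitary: "\<And>\<theta>. unitary (U \<theta>)"
    and U_smooth: "smooth U"
    and U_deriv: "\<And>a \<theta>. has_partial U a \<theta> (cscale (- \<i>) (U \<theta> ** \<mu> a \<theta>))"
    and \<mu>_herm: "\<And>a \<theta>. hermitian (\<mu> a \<theta>)"
    and \<mu>_smooth: "\<And>a. smooth (\<mu> a)"
    and W_unitary: "unitary W"
    and surj: "\<And>\<theta>. span (range (\<lambda>a. \<mu> a \<theta>)) = {H. hermitian H}"
    and crit: "critical_point (\<lambda>\<theta>. frob_sq (U \<theta> - W)) \<theta>s"
  shows "let L = (\<lambda>\<theta>. frob_sq (U \<theta> - W)); X = adj (U \<theta>s) ** W in
     hermitian X \<and> unitary X \<and>
     (U \<theta>s = W \<longrightarrow> pos_semidef (hessian L \<theta>s) \<and> L \<theta>s = 0 \<and> (\<forall>\<theta>. L \<theta>s \<le> L \<theta>)) \<and>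
     (U \<theta>s = - W \<longrightarrow> neg_semidef (hessian L \<theta>s) \<and> (\<forall>\<theta>. L \<theta> \<le> L \<theta>s)) \<and>
     (U \<theta>s \<noteq> W \<and> U \<theta>s \<noteq> - W \<longrightarrow>
        is_eigenvalue X 1 \<and> is_eigenvalue X (-1) \<and>
        (\<exists>l>0. is_eigenvalue (hessian L \<theta>s) l) \<and>
        (\<exists>l<0. is_eigenvalue (hessian L \<theta>s) l) \<and>
        saddle_point L \<theta>s) \<and>
     (\<forall>\<theta>. local_min L \<theta> \<longrightarrow> (\<forall>\<theta>'. L \<theta> \<le> L \<theta>'))"
proof -
  \<comment> \<open>Unused: the dimension 2^N, smoothness beyond C^1, and \<open>\<mu>_herm\<close> (implied by \<open>surj\<close>).\<close>
  interpret analog_ansatz U \<mu> W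
  proof
    show "continuous_on UNIV U"
      using U_smooth by (metis smooth_def Ck.simps(1))
    show "Ck 1 (\<mu> a)" for a
      using \<mu>_smooth by (simp add: smooth_def)
  qed (fact U_unitary U_deriv W_unitary surj)+
  have L_eq: "(\<lambda>\<theta>. frob_sq (U \<theta> - W)) = L" and X_eq: "adj (U \<theta>s) ** W = X \<theta>s"
    by (simp_all add: L_def X_def fun_eq_iff)
  with crit have "critical_point L \<theta>s"
    by simp
  then show ?thesis
    unfolding Let_def L_eq X_eq
    using critical_point_imp_hermitian_X X_unitary global_min_at_W global_max_at_minus_W
      saddle_point_otherwise local_min_imp_global_min
    by blast
qed

end
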